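(* Let $R\subseteq\{0,1\}^V$ be a delta matroid that is not basically binary, but such that every pinning $R_p$ with $\mathrm{dom}(p)\ne\emptyset$ is basically binary. Then there is $h:V\to\mathbb Z$ such that the $h$-maximisation $R_{h\text{-}\max}$ is equivalent (by renaming variables) to a flip $\mathrm{PM}_3^U$ of $\mathrm{PM}_3=\{(0,0,1),(0,1,0),(1,0,0)\}$ for some $U\subseteq\{1,2,3\}$.
   Context: $R$ is a delta matroid if for all $x,y\in R$ and all $i$ with $x_i\ne y_i$ there exists $j$ with $x_j\ne y_j$ (possibly $j=i$) such that $x^{\{i,j\}}\in R$, where $x^U$ is $x$ with coordinates in $U$ flipped. A relation is basically binary if it is equivalent (up to renaming variables) to a Cartesian product of relations of arity at most two. A partial configuration $p$ is an element of $\{0,1\}^{\mathrm{dom}(p)}$ with $\mathrm{dom}(p)\subseteq V$, and $R_p=\{x\in\{0,1\}^{V\setminus\mathrm{dom}(p)}:(x,p)\in R\}$. For $h:V\to\mathbb Z$, $R_{h\text{-}\max}=\{x\in R:\sum_i h_ix_i=\max_{y\in R}\sum_ih_iy_i\}$. The flip of a relation $S$ is $S^U=\{x: x^U\in S\}$. *)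

theory Defs
  imports Main
begin

text \<open>Configurations on a finite variable set D: Boolean functions (True = 1) that are
  False outside D, i.e. elements of {0,1}^D represented extensionally.\<close>
definition conf :: "'v set \<Rightarrow> ('v \<Rightarrow> bool) set" where
  "conf D = {x. \<forall>i. i \<notin> D \<longrightarrow> \<not> x i}"

definition flip :: "('v \<Rightarrow> bool) \<Rightarrow> 'v set \<Rightarrow> ('v \<Rightarrow> bool)" where
  "flip x U = (\<lambda>k. if k \<in> U then \<not> x k else x k)"

definition delta_matroid :: "('v \<Rightarrow> bool) set \<Rightarrow> bool" where
  "delta_matroid R \<longleftrightarrow>
     (\<forall>x\<in>R. \<forall>y\<in>R. \<forall>i. x i \<noteq> y i \<longrightarrow>
        (\<exists>j. x j \<noteq> y j \<and> flip x {i, j} \<in> R))"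

definition restr :: "('v \<Rightarrow> bool) \<Rightarrow> 'v set \<Rightarrow> ('v \<Rightarrow> bool)" where
  "restr x B = (\<lambda>i. if i \<in> B then x i else False)"

text \<open>Basically binary: (up to renaming variables) a Cartesian product of relations of
  arity at most two, i.e. there is a partition of V into blocks of size at most 2 and
  relations on the blocks whose product is R.  (Empty blocks, i.e. arity-0 relations,
  are allowed.)\<close>
definition basically_binary :: "'v set \<Rightarrow> ('v \<Rightarrow> bool) set \<Rightarrow> bool" where
  "basically_binary V R \<longleftrightarrow>
     (\<exists>P S. (\<forall>B\<in>P. B \<subseteq> V \<and> card B \<le> 2 \<and> S B \<subseteq> conf B) \<and> \<Union>P = V \<and>
            (\<forall>B\<in>P. \<forall>C\<in>P. B \<noteq> C \<longrightarrow> B \<inter> C = {}) \<and>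
            R = {x \<in> conf V. \<forall>B\<in>P. restr x B \<in> S B})"

definition pinning :: "'v set \<Rightarrow> ('v \<Rightarrow> bool) \<Rightarrow> ('v \<Rightarrow> bool) set \<Rightarrow> ('v \<Rightarrow> bool) set" where
  "pinning D p R = {x. (\<forall>i. i \<in> D \<longrightarrow> \<not> x i) \<and> (\<lambda>i. if i \<in> D then p i else x i) \<in> R}"

definition weight :: "'v set \<Rightarrow> ('v \<Rightarrow> int) \<Rightarrow> ('v \<Rightarrow> bool) \<Rightarrow> int" where
  "weight V h x = (\<Sum>i\<in>V. h i * of_bool (x i))"

definition hmax :: "'v set \<Rightarrow> ('v \<Rightarrow> int) \<Rightarrow> ('v \<Rightarrow> bool) set \<Rightarrow> ('v \<Rightarrow> bool) set" where
  "hmax V h R = {x \<in> R. weight V h x = Max (weight V h ` R)}"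

definition flip_rel :: "('v \<Rightarrow> bool) set \<Rightarrow> 'v set \<Rightarrow> ('v \<Rightarrow> bool) set" where
  "flip_rel S U = {x. flip x U \<in> S}"

definition equiv_rel :: "'v set \<Rightarrow> ('v \<Rightarrow> bool) set \<Rightarrow> 'w set \<Rightarrow> ('w \<Rightarrow> bool) set \<Rightarrow> bool" where
  "equiv_rel V R W S \<longleftrightarrow>
     (\<exists>\<pi>. bij_betw \<pi> V W \<and>
        R = (\<lambda>y v. if v \<in> V then y (\<pi> v) else False) ` (S \<inter> conf W))"

text \<open>PM_3 = {(0,0,1),(0,1,0),(1,0,0)} on variables 1,2,3.\<close>
definition PM3 :: "(nat \<Rightarrow> bool) set" where
  "PM3 = {(\<lambda>i. i = 3), (\<lambda>i. i = 2), (\<lambda>i. i = 1)}"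

end

theory Submission
  imports Defs
begin

(* Proof idea.  For a relation R and F \<in> R call {u,v} an edge at F if F^{u,v} \<in> R but
   not both F^{u} and F^{v} are in R.  The argument has three parts.

   1. Edges detect product structure: if no edge of a delta matroid R leaves a set A,
      then R is closed under combining the A-part of one member with the rest of another.
      Hence, if the edges form a matching (there is no path u-v-w of two edges), the
      blocks of the matching exhibit R as basically binary.
   2. Pinning one variable z keeps the edges avoiding z; since every pinning is basically
      binary, such an edge is a block of size two of the pinning.  Using this and the
      exchange axiom one shows that on four or more variables there is no path of two
      edges, so R would be basically binary by part 1.  Hence |V| = 3 (for |V| \<le> 2
      every relation is basically binary).
   3. On three variables the delta-matroid axiom together with a two-edge path leaves a
      finite case analysis: there is a point q whose three neighbours lie in R while
      either q \<notin> R, or R lies in the Hamming ball of radius one around q.  A linear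
      weight pointing towards (resp. away from) q selects exactly these neighbours,
      which form a flipped copy of PM_3. *)

section \<open>Edges and mixing\<close>

definition edge :: "('v \<Rightarrow> bool) set \<Rightarrow> ('v \<Rightarrow> bool) \<Rightarrow> 'v \<Rightarrow> 'v \<Rightarrow> bool" where
  "edge R F u v \<longleftrightarrow> flip F {u,v} \<in> R \<and> \<not> (flip F {u} \<in> R \<and> flip F {v} \<in> R)"

lemma edge_neq: "edge R F u v \<Longrightarrow> u \<noteq> v"
  by (auto simp: edge_def)

lemma edge_sym: "edge R F u v \<Longrightarrow> edge R F v u"
  by (auto simp: edge_def insert_commute)

text \<open>Edges only join variables of the domain: flipping a variable outside V leaves conf V.\<close>
lemma edge_in:
  assumes "R \<subseteq> conf V" "F \<in> R" "edge R F u v"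
  shows "u \<in> V" "v \<in> V"
proof -
  have f: "flip F {u,v} \<in> conf V" "F \<in> conf V" using assms by (auto simp: edge_def)
  have "t \<in> V" if t: "t \<in> {u,v}" for t
  proof (rule ccontr)
    assume "t \<notin> V"
    then have "\<not> F t" "\<not> flip F {u,v} t" using f by (auto simp: conf_def)
    then show False using t by (simp add: flip_def)
  qed
  then show "u \<in> V" "v \<in> V" by auto
qed

definition mix :: "'v set \<Rightarrow> ('v \<Rightarrow> bool) \<Rightarrow> ('v \<Rightarrow> bool) \<Rightarrow> ('v \<Rightarrow> bool)" where
  "mix B F G = (\<lambda>t. if t \<in> B then F t else G t)"

text \<open>Induction on the
  number of variables outside A where x and y differ: the exchange axiom moves x one step
  towards y outside A, and the absence of crossing edges keeps the step outside A.\<close>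
lemma mix_closed_if_no_crossing_edge:
  assumes fin: "finite V" and sub: "R \<subseteq> conf V" and dm: "delta_matroid R"
    and no_cross: "\<And>F i j. F \<in> R \<Longrightarrow> i \<in> A \<Longrightarrow> j \<notin> A \<Longrightarrow> \<not> edge R F i j"
    and x: "x \<in> R" and y: "y \<in> R"
  shows "mix A x y \<in> R"
  using x
proof (induction "card {t\<in>V. t \<notin> A \<and> x t \<noteq> y t}" arbitrary: x rule: less_induct)
  case less
  let ?D = "\<lambda>x. {t\<in>V. t \<notin> A \<and> x t \<noteq> y t}"
  show ?case
  proof (cases "?D x = {}")
    case True
    have "x \<in> conf V" "y \<in> conf V" using less.prems y sub by auto
    then have "mix A x y = x" using True by (auto simp: mix_def conf_def fun_eq_iff)
    then show ?thesis using less.prems by simp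
  next
    case False
    then obtain i where i: "i \<in> V" "i \<notin> A" "x i \<noteq> y i" by blast
    obtain x' where x': "x' \<in> R" "\<forall>t\<in>A. x' t = x t" "?D x' \<subseteq> ?D x - {i}"
    proof -
      obtain j where j: "x j \<noteq> y j" "flip x {i,j} \<in> R"
        using dm less.prems y i(3) unfolding delta_matroid_def by metis
      show thesis
      proof (cases "j \<in> A")
        case False
        have "flip x {i,j} \<in> R" "\<forall>t\<in>A. flip x {i,j} t = x t" "?D (flip x {i,j}) \<subseteq> ?D x - {i}"
          using False i j by (auto simp: flip_def)
        then show thesis by (rule that)
      next
        case True
        then have "\<not> edge R x j i" using no_cross less.prems i(2) by blast
        then have "flip x {i} \<in> R" using j by (auto simp: edge_def insert_commute)
        moreover have "\<forall>t\<in>A. flip x {i} t = x t" "?D (flip x {i}) \<subseteq> ?D x - {i}"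
          using i by (auto simp: flip_def)
        ultimately show thesis by (rule that)
      qed
    qed
    have "card (?D x') \<le> card (?D x - {i})" by (rule card_mono) (use fin x'(3) in auto)
    also have "\<dots> < card (?D x)" using fin i by (intro card_Diff1_less) auto
    finally have "mix A x' y \<in> R" using less.hyps x'(1) by blast
    moreover have "mix A x' y = mix A x y" using x'(2) by (auto simp: mix_def)
    ultimately show ?thesis by simp
  qed
qed

section \<open>Basically binary relations from edge-closed partitions\<close>

lemma bb_empty: "basically_binary V {}"
  unfolding basically_binary_def
  by (intro exI[of _ "insert {} ((\<lambda>u. {u}) ` V)"] exI[of _ "\<lambda>_. {}"]) (auto simp: conf_def)

lemma bb_of_edge_closed_partition:
  assumes fin: "finite V" and sub: "R \<subseteq> conf V" and dm: "delta_matroid R" and r: "r \<in> R"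
    and blocks: "\<And>B. B \<in> P \<Longrightarrow> B \<subseteq> V \<and> card B \<le> 2"
    and cover: "\<Union>P = V"
    and disj: "\<And>B C. B \<in> P \<Longrightarrow> C \<in> P \<Longrightarrow> B \<noteq> C \<Longrightarrow> B \<inter> C = {}"
    and closed: "\<And>F B i j. F \<in> R \<Longrightarrow> B \<in> P \<Longrightarrow> i \<in> B \<Longrightarrow> j \<notin> B \<Longrightarrow> \<not> edge R F i j"
  shows "basically_binary V R"
proof -
  define S where "S B = (\<lambda>y. restr y B) ` R" for B
  have finP: "finite P" using fin cover by (metis finite_UnionD)
  have mix_union: "mix (\<Union>Q) x r \<in> R"
    if "finite Q" "Q \<subseteq> P" and x: "\<forall>B\<in>P. restr x B \<in> S B" for Q x
    using that(1,2)
  proof (induction Q rule: finite_induct)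
    case empty
    then show ?case using r by (simp add: mix_def)
  next
    case (insert B Q)
    then have B: "B \<in> P" and QP: "Q \<subseteq> P" by simp_all
    obtain w where w: "w \<in> R" "restr w B = restr x B" using x B unfolding S_def by force
    have wx: "w t = x t" if "t \<in> B" for t using fun_cong[OF w(2), of t] that by (simp add: restr_def)
    have "mix B w (mix (\<Union>Q) x r) \<in> R"
      by (rule mix_closed_if_no_crossing_edge[OF fin sub dm _ w(1) insert.IH[OF QP]])
        (use closed B in blast)
    moreover have "mix B w (mix (\<Union>Q) x r) = mix (\<Union>(insert B Q)) x r"
      using wx by (auto simp: mix_def)
    ultimately show ?case by simp
  qed
  have product: "x \<in> R" if "x \<in> conf V" "\<forall>B\<in>P. restr x B \<in> S B" for x
  proof -
    have "mix V x r = x" using that(1) r sub cover by (auto simp: mix_def conf_def fun_eq_iff)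
    then show ?thesis using mix_union[OF finP _ that(2)] cover by simp
  qed
  show ?thesis
    unfolding basically_binary_def
  proof (intro exI[of _ P] exI[of _ S] conjI ballI impI)
    show "S B \<subseteq> conf B" for B unfolding S_def by (auto simp: conf_def restr_def)
    show "R = {x \<in> conf V. \<forall>B\<in>P. restr x B \<in> S B}" using product sub unfolding S_def by auto
  qed (use blocks cover disj in auto)
qed

lemma matching_blocks:
  assumes E_sym: "\<And>u v. E u v \<Longrightarrow> E v u" and E_uniq: "\<And>u v w. E u v \<Longrightarrow> E u w \<Longrightarrow> v = w"
    and E_inV: "\<And>u v. E u v \<Longrightarrow> v \<in> V"
  shows "\<exists>P. (\<forall>B\<in>P. B \<subseteq> V \<and> card B \<le> 2) \<and> \<Union>P = V \<and>
    (\<forall>B\<in>P. \<forall>C\<in>P. B \<noteq> C \<longrightarrow> B \<inter> C = {}) \<and> (\<forall>B\<in>P. \<forall>u\<in>B. \<forall>v. E u v \<longrightarrow> v \<in> B)"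
proof -
  define blk where "blk u = insert u {v. E u v}" for u
  have blk_pair: "blk u = {u, v}" if "E u v" for u v using that E_uniq unfolding blk_def by auto
  have blk_single: "blk u = {u}" if "\<nexists>v. E u v" for u using that unfolding blk_def by auto
  have blk_card: "card (blk u) \<le> 2" for u
    by (cases "\<exists>v. E u v") (auto simp: blk_single card_insert_le_m1 dest!: blk_pair)
  have blk_same: "blk t = blk u" if "t \<in> blk u" for t u
  proof (cases "t = u")
    case False
    then have "E u t" using that unfolding blk_def by auto
    then show ?thesis using blk_pair E_sym by (metis insert_commute)
  qed simp
  show ?thesis
  proof (rule exI[of _ "blk ` V"], intro conjI)
    show "\<Union>(blk ` V) = V" using E_inV unfolding blk_def by auto
    show "\<forall>B\<in>blk ` V. B \<subseteq> V \<and> card B \<le> 2" using E_inV blk_card unfolding blk_def by auto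
    show "\<forall>B\<in>blk ` V. \<forall>C\<in>blk ` V. B \<noteq> C \<longrightarrow> B \<inter> C = {}" using blk_same by blast
    show "\<forall>B\<in>blk ` V. \<forall>u\<in>B. \<forall>v. E u v \<longrightarrow> v \<in> B" using blk_same unfolding blk_def by blast
  qed
qed

definition path_free :: "('v \<Rightarrow> bool) set \<Rightarrow> bool" where
  "path_free R \<longleftrightarrow> (\<forall>F1\<in>R. \<forall>F2\<in>R. \<forall>u v w. edge R F1 u v \<longrightarrow> edge R F2 v w \<longrightarrow> u = w)"

lemma path_freeD: "path_free R \<Longrightarrow> F1 \<in> R \<Longrightarrow> F2 \<in> R \<Longrightarrow> edge R F1 u v \<Longrightarrow> edge R F2 v w \<Longrightarrow> u = w"
  unfolding path_free_def by blast

lemma bb_of_path_free: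
  assumes fin: "finite V" and sub: "R \<subseteq> conf V" and dm: "delta_matroid R" and pf: "path_free R"
  shows "basically_binary V R"
proof (cases "R = {}")
  case True
  then show ?thesis by (simp add: bb_empty)
next
  case False
  then obtain r where r: "r \<in> R" by blast
  define E where "E u v \<longleftrightarrow> (\<exists>F\<in>R. edge R F u v)" for u v
  have E_sym: "E v u" if uv: "E u v" for u v
  proof -
    obtain F where F: "F \<in> R" "edge R F u v" using uv unfolding E_def by blast
    show ?thesis unfolding E_def using F(1) edge_sym[OF F(2)] by blast
  qed
  have E_inV: "E u v \<Longrightarrow> v \<in> V" for u v unfolding E_def using edge_in(2)[OF sub] by blast
  have E_uniq: "v = w" if uvw: "E u v" "E u w" for u v w
  proof -
    obtain F G where F: "F \<in> R" "edge R F u v" and G: "G \<in> R" "edge R G u w"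
      using uvw unfolding E_def by blast
    show ?thesis by (rule path_freeD[OF pf F(1) G(1) edge_sym[OF F(2)] G(2)])
  qed
  have "\<exists>P. (\<forall>B\<in>P. B \<subseteq> V \<and> card B \<le> 2) \<and> \<Union>P = V \<and>
    (\<forall>B\<in>P. \<forall>C\<in>P. B \<noteq> C \<longrightarrow> B \<inter> C = {}) \<and> (\<forall>B\<in>P. \<forall>u\<in>B. \<forall>v. E u v \<longrightarrow> v \<in> B)"
    using E_sym E_uniq E_inV by (rule matching_blocks)
  then obtain P where P: "\<forall>B\<in>P. B \<subseteq> V \<and> card B \<le> 2" "\<Union>P = V"
    "\<forall>B\<in>P. \<forall>C\<in>P. B \<noteq> C \<longrightarrow> B \<inter> C = {}" "\<forall>B\<in>P. \<forall>u\<in>B. \<forall>v. E u v \<longrightarrow> v \<in> B"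
    by (elim exE conjE) (rule that)
  have closed: "\<not> edge R F i j" if "F \<in> R" "B \<in> P" "i \<in> B" "j \<notin> B" for F B i j
    using P(4) that unfolding E_def by blast
  show ?thesis
    using fin sub dm r P(1)[rule_format] P(2) P(3)[rule_format] closed by (rule bb_of_edge_closed_partition)
qed

lemma bb_if_card_le_2:
  assumes "card V \<le> 2" and sub: "R \<subseteq> conf V"
  shows "basically_binary V R"
  unfolding basically_binary_def
proof (intro exI[of _ "{V}"] exI[of _ "\<lambda>_. R"] conjI)
  have "restr x V = x" if "x \<in> conf V" for x
    using that by (auto simp: restr_def conf_def fun_eq_iff)
  then show "R = {x \<in> conf V. \<forall>B\<in>{V}. restr x B \<in> R}" using sub by auto
qed (use assms in auto)

section \<open>Edges in a basically binary relation\<close>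

locale product_form =
  fixes W :: "'v set" and T :: "('v \<Rightarrow> bool) set" and P :: "'v set set" and S
  assumes T: "T = {x \<in> conf W. \<forall>B\<in>P. restr x B \<in> S B}"
    and disj: "\<And>B C. B \<in> P \<Longrightarrow> C \<in> P \<Longrightarrow> B \<noteq> C \<Longrightarrow> B \<inter> C = {}"
    and cover: "\<Union>P = W"
begin

lemma T_conf: "T \<subseteq> conf W" using T by auto

lemma mix_iff:
  assumes "B \<in> P" "H \<in> conf W" "G \<in> T"
  shows "mix B H G \<in> T \<longleftrightarrow> restr H B \<in> S B"
proof -
  have same: "restr (mix B H G) B = restr H B" by (auto simp: restr_def mix_def fun_eq_iff)
  have other: "restr (mix B H G) C = restr G C" if "C \<in> P" "C \<noteq> B" for C
    using disj[of B C] assms(1) that by (auto simp: restr_def mix_def fun_eq_iff)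
  have "mix B H G \<in> conf W" using assms(2,3) T by (auto simp: conf_def mix_def)
  then show ?thesis using assms(1,3) T same other by (auto, metis)
qed

text \<open>Every edge of T lies inside a block: otherwise each endpoint could be flipped alone.\<close>
lemma edge_within_block:
  assumes F: "F \<in> T" and e: "edge T F u v" and B: "B \<in> P" "u \<in> B"
  shows "v \<in> B"
proof (rule ccontr)
  assume vB: "v \<notin> B"
  have "v \<in> W" using edge_in[OF T_conf F e] by simp
  then obtain C where C: "C \<in> P" "v \<in> C" using cover by auto
  have uC: "u \<notin> C" using disj[OF B(1) C(1)] C vB B(2) by auto
  have f2: "flip F {u,v} \<in> T" using e by (simp add: edge_def)
  then have fc: "flip F {u,v} \<in> conf W" using T_conf by auto
  have blockwise: "mix D (flip F {u,v}) F \<in> T" if "D \<in> P" for D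
    using mix_iff[OF that fc F] f2 T that by auto
  have "flip F {u} = mix B (flip F {u,v}) F" using vB B by (auto simp: mix_def flip_def fun_eq_iff)
  moreover have "flip F {v} = mix C (flip F {u,v}) F" using uC C by (auto simp: mix_def flip_def fun_eq_iff)
  ultimately show False using blockwise[OF B(1)] blockwise[OF C(1)] e by (simp add: edge_def)
qed

lemma mix_edge:
  assumes B: "B \<in> P" and F: "F \<in> T" and G: "G \<in> T" and uv: "u \<in> B" "v \<in> B"
  shows "mix B F G \<in> T" "edge T (mix B F G) u v \<longleftrightarrow> edge T F u v"
proof -
  have mem: "flip (mix B F G) X \<in> T \<longleftrightarrow> flip F X \<in> T" if X: "X \<subseteq> B" for X
  proof -
    have fc: "flip F X \<in> conf W" using F T_conf X B cover by (auto simp: flip_def conf_def)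
    have "flip (mix B F G) X = mix B (flip F X) G" "mix B (flip F X) F = flip F X"
      using X by (auto simp: flip_def mix_def fun_eq_iff)
    then show ?thesis using mix_iff[OF B fc G] mix_iff[OF B fc F] by simp
  qed
  have "flip (mix B F G) {} = mix B F G" "flip F {} = F" by (auto simp: flip_def)
  then show "mix B F G \<in> T" using mem[of "{}"] F by simp
  show "edge T (mix B F G) u v \<longleftrightarrow> edge T F u v"
    unfolding edge_def using mem uv by simp
qed

end

lemma product_form_of_bb:
  "basically_binary W T \<Longrightarrow> \<exists>P S. product_form W T P S \<and> (\<forall>B\<in>P. B \<subseteq> W \<and> card B \<le> 2)"
  unfolding basically_binary_def product_form_def by blast

section \<open>Pinning a single variable\<close>

definition pin1 :: "'v \<Rightarrow> bool \<Rightarrow> ('v \<Rightarrow> bool) set \<Rightarrow> ('v \<Rightarrow> bool) set" where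
  "pin1 z c R = pinning {z} (\<lambda>t. t = z \<and> c) R"

lemma pin1_mem: "H z = c \<Longrightarrow> H \<in> R \<longleftrightarrow> H(z:=False) \<in> pin1 z c R"
proof -
  assume "H z = c"
  then have "(\<lambda>i. if i \<in> {z} then (i = z \<and> c) else (H(z:=False)) i) = H" by (auto simp: fun_eq_iff)
  then show ?thesis unfolding pin1_def pinning_def by auto
qed

lemma pin1_edge:
  assumes "H z = c" "u \<noteq> z" "v \<noteq> z"
  shows "edge R H u v \<longleftrightarrow> edge (pin1 z c R) (H(z:=False)) u v"
proof -
  have "flip H X \<in> R \<longleftrightarrow> flip (H(z:=False)) X \<in> pin1 z c R" if "z \<notin> X" for X
  proof -
    have "flip (H(z:=False)) X = (flip H X)(z:=False)" "flip H X z = c"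
      using that assms(1) by (auto simp: flip_def fun_eq_iff)
    then show ?thesis using pin1_mem[of "flip H X" z c R] by simp
  qed
  then show ?thesis unfolding edge_def using assms by simp
qed

lemma mix_upd: "z \<notin> B \<Longrightarrow> (mix B F G)(z:=False) = mix B (F(z:=False)) (G(z:=False))"
  by (auto simp: mix_def fun_eq_iff)

context
  fixes V :: "'v set" and R :: "('v \<Rightarrow> bool) set"
  assumes fin: "finite V" and sub: "R \<subseteq> conf V"
    and pin1_bb: "\<And>z c. z \<in> V \<Longrightarrow> basically_binary (V - {z}) (pin1 z c R)"
begin

text \<open>An edge of R avoiding z becomes an edge of the basically binary pinning at F z, so
  it is a block of that pinning.\<close>
lemma edge_pinned_block:
  assumes z: "z \<in> V" and F: "F \<in> R" and e: "edge R F u v" and d: "z \<noteq> u" "z \<noteq> v"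
  obtains P S where "product_form (V - {z}) (pin1 z (F z) R) P S" "{u, v} \<in> P"
proof -
  obtain P S where pf: "product_form (V - {z}) (pin1 z (F z) R) P S"
    and PB: "\<forall>B\<in>P. B \<subseteq> V - {z} \<and> card B \<le> 2"
    using product_form_of_bb[OF pin1_bb[OF z]] by blast
  interpret product_form "V - {z}" "pin1 z (F z) R" P S by (rule pf)
  have "u \<in> V" using edge_in[OF sub F e] by simp
  then obtain B where B: "B \<in> P" "u \<in> B" using cover d by auto
  have "F(z:=False) \<in> pin1 z (F z) R" using pin1_mem[of F z "F z" R] F by simp
  moreover have "edge (pin1 z (F z) R) (F(z:=False)) u v" using pin1_edge[of F z "F z" u v R] e d by simp
  ultimately have "v \<in> B" using edge_within_block B by blast
  then have "{u, v} \<subseteq> B" "card {u, v} = 2" "finite B" "card B \<le> 2"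
    using B PB fin edge_neq[OF e] finite_subset by auto
  then have "B = {u, v}" by (metis card_seteq)
  then show ?thesis using that pf B by blast
qed

text \<open>Hence there is no two-edge path u-v-w at members agreeing on a fourth variable z:
  both edges would be blocks of the same pinning, but they overlap without being equal.\<close>
lemma no_path_agreeing_outside:
  assumes z: "z \<in> V" and F: "F1 \<in> R" "F2 \<in> R" "F1 z = F2 z"
    and d: "u \<noteq> w" "z \<noteq> u" "z \<noteq> v" "z \<noteq> w"
    and e: "edge R F1 u v" "edge R F2 v w"
  shows False
proof -
  obtain P S where pf: "product_form (V - {z}) (pin1 z (F1 z) R) P S" and B: "{u, v} \<in> P"
    by (rule edge_pinned_block[OF z F(1) e(1) d(2,3)])
  interpret product_form "V - {z}" "pin1 z (F1 z) R" P S by (rule pf)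
  have "F2(z:=False) \<in> pin1 z (F1 z) R" using pin1_mem[of F2 z "F1 z" R] F by simp
  moreover have "edge (pin1 z (F1 z) R) (F2(z:=False)) v w"
    using pin1_edge[of F2 z "F1 z" v w R] e(2) d F(3) by simp
  ultimately have "w \<in> {u, v}" using edge_within_block B by blast
  then show False using d edge_neq[OF e(2)] by auto
qed

lemma edge_transplant:
  assumes z: "z \<in> V" and F: "F \<in> R" "G \<in> R" "F z = G z"
    and d: "z \<noteq> u" "z \<noteq> v" and e: "edge R F u v"
  shows "mix {u,v} F G \<in> R \<and> edge R (mix {u,v} F G) u v"
proof -
  obtain P S where pf: "product_form (V - {z}) (pin1 z (F z) R) P S" and B: "{u, v} \<in> P"
    by (rule edge_pinned_block[OF z F(1) e d])
  interpret product_form "V - {z}" "pin1 z (F z) R" P S by (rule pf)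
  have F': "F(z:=False) \<in> pin1 z (F z) R" using pin1_mem[of F z "F z" R] F by simp
  have G': "G(z:=False) \<in> pin1 z (F z) R" using pin1_mem[of G z "F z" R] F by simp
  have e': "edge (pin1 z (F z) R) (F(z:=False)) u v" using pin1_edge[of F z "F z" u v R] e d by simp
  have mz: "mix {u,v} F G z = F z" using d F by (simp add: mix_def)
  have zB: "z \<notin> {u, v}" using d by auto
  have "mix {u,v} (F(z:=False)) (G(z:=False)) \<in> pin1 z (F z) R"
    "edge (pin1 z (F z) R) (mix {u,v} (F(z:=False)) (G(z:=False))) u v"
    using mix_edge[OF B F' G'] e' by auto
  then show ?thesis
    using pin1_mem[of "mix {u,v} F G" z "F z" R] pin1_edge[of "mix {u,v} F G" z "F z" u v R]
      mz mix_upd[OF zB] d by simp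
qed

text \<open>Given a path u-v-w at F1, F2 pick a fourth
  variable z.  If F1, F2 agree at z we are done; otherwise the exchange axiom and edge
  transplantation produce a path at members that do agree at z.\<close>
lemma path_free_if_card_ge_4:
  assumes dm: "delta_matroid R" and c4: "card V \<ge> 4"
  shows "path_free R"
  unfolding path_free_def
proof (intro ballI allI impI; rule ccontr)
  fix F1 F2 u v w
  assume F: "F1 \<in> R" "F2 \<in> R" and e1: "edge R F1 u v" and e2: "edge R F2 v w" and uw: "u \<noteq> w"
  have uv: "u \<noteq> v" "v \<noteq> w" using edge_neq[OF e1] edge_neq[OF e2] by auto
  have inV: "u \<in> V" "v \<in> V" "w \<in> V" using edge_in[OF sub F(1) e1] edge_in[OF sub F(2) e2] by auto
  have "\<not> V \<subseteq> {u,v,w}"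
  proof
    assume "V \<subseteq> {u,v,w}"
    then have "card V \<le> card {u,v,w}" by (intro card_mono) auto
    also have "\<dots> \<le> 3" by (simp add: card_insert_le_m1)
    finally show False using c4 by simp
  qed
  then obtain z where z: "z \<in> V" "z \<noteq> u" "z \<noteq> v" "z \<noteq> w" by auto
  show False
  proof (cases "F1 z = F2 z")
    case True
    then show False using no_path_agreeing_outside[OF z(1) F True uw] z e1 e2 by auto
  next
    case False
    then obtain j where j: "F1 j \<noteq> F2 j" "flip F1 {z,j} \<in> R"
      using dm F unfolding delta_matroid_def by metis
    show False
    proof (cases "j = w")
      case False
      \<comment> \<open>move the edge u-v into F1^{z,j}, which agrees with F2 at z\<close>
      let ?F3 = "flip F1 {z,j}"
      have "?F3 w = F1 w" using False z by (simp add: flip_def)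
      then have M: "mix {u,v} F1 ?F3 \<in> R \<and> edge R (mix {u,v} F1 ?F3) u v"
        using edge_transplant[OF inV(3) F(1) j(2)] uv uw e1 by auto
      have "mix {u,v} F1 ?F3 z = F2 z" using z \<open>F1 z \<noteq> F2 z\<close> by (auto simp: mix_def flip_def)
      then show False using no_path_agreeing_outside[OF z(1) _ F(2) _ uw] M z e2 by auto
    next
      case True
      \<comment> \<open>move the edge v-w into F1^{z,w} (agreeing with F2 at z), then into F1 via u\<close>
      let ?G = "flip F1 {z,w}"
      have G: "?G \<in> R" using j True by simp
      have Gz: "F2 z = ?G z" using \<open>F1 z \<noteq> F2 z\<close> by (auto simp: flip_def)
      have M: "mix {v,w} F2 ?G \<in> R \<and> edge R (mix {v,w} F2 ?G) v w"
        using edge_transplant[OF z(1) F(2) G Gz] z e2 by auto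
      have Mu: "mix {v,w} F2 ?G u = F1 u" using uv uw z by (auto simp: mix_def flip_def)
      have M2: "mix {v,w} (mix {v,w} F2 ?G) F1 \<in> R \<and> edge R (mix {v,w} (mix {v,w} F2 ?G) F1) v w"
        using edge_transplant[of u "mix {v,w} F2 ?G" F1 v w] inV(1) F(1) Mu M uv uw by auto
      have "F1 z = mix {v,w} (mix {v,w} F2 ?G) F1 z" using z by (simp add: mix_def)
      then show False using no_path_agreeing_outside[OF z(1) F(1) _ _ uw] M2 z e1 by auto
    qed
  qed
qed

end

section \<open>Three variables\<close>

definition "edge12 r p1 p2 p3 \<longleftrightarrow> r (\<not>p1) (\<not>p2) p3 \<and> \<not> (r (\<not>p1) p2 p3 \<and> r p1 (\<not>p2) p3)"
definition "edge13 r p1 p2 p3 \<longleftrightarrow> r (\<not>p1) p2 (\<not>p3) \<and> \<not> (r (\<not>p1) p2 p3 \<and> r p1 p2 (\<not>p3))"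
definition "edge23 r p1 p2 p3 \<longleftrightarrow> r p1 (\<not>p2) (\<not>p3) \<and> \<not> (r p1 (\<not>p2) p3 \<and> r p1 p2 (\<not>p3))"

definition "centre r q1 q2 q3 \<longleftrightarrow> r (\<not>q1) q2 q3 \<and> r q1 (\<not>q2) q3 \<and> r q1 q2 (\<not>q3) \<and>
   (\<not> r q1 q2 q3 \<or> (\<forall>p1 p2 p3. r p1 p2 p3 \<longrightarrow> (p1 = q1 \<and> p2 = q2) \<or> (p1 = q1 \<and> p3 = q3) \<or> (p2 = q2 \<and> p3 = q3)))"

lemma centre_of_path:
  fixes r :: "bool \<Rightarrow> bool \<Rightarrow> bool \<Rightarrow> bool"
  assumes DA: "\<forall>p1 p2 p3 q1 q2 q3. r p1 p2 p3 \<longrightarrow> r q1 q2 q3 \<longrightarrow> p1 \<noteq> q1 \<longrightarrow>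
      r (\<not>p1) p2 p3 \<or> (p2 \<noteq> q2 \<and> r (\<not>p1) (\<not>p2) p3) \<or> (p3 \<noteq> q3 \<and> r (\<not>p1) p2 (\<not>p3))"
  and DB: "\<forall>p1 p2 p3 q1 q2 q3. r p1 p2 p3 \<longrightarrow> r q1 q2 q3 \<longrightarrow> p2 \<noteq> q2 \<longrightarrow>
      r p1 (\<not>p2) p3 \<or> (p1 \<noteq> q1 \<and> r (\<not>p1) (\<not>p2) p3) \<or> (p3 \<noteq> q3 \<and> r p1 (\<not>p2) (\<not>p3))"
  and DC: "\<forall>p1 p2 p3 q1 q2 q3. r p1 p2 p3 \<longrightarrow> r q1 q2 q3 \<longrightarrow> p3 \<noteq> q3 \<longrightarrow>
      r p1 p2 (\<not>p3) \<or> (p1 \<noteq> q1 \<and> r (\<not>p1) p2 (\<not>p3)) \<or> (p2 \<noteq> q2 \<and> r p1 (\<not>p2) (\<not>p3))"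
  and F: "r p1 p2 p3" "r q1 q2 q3"
  and path: "(edge12 r p1 p2 p3 \<and> edge13 r q1 q2 q3) \<or> (edge12 r p1 p2 p3 \<and> edge23 r q1 q2 q3)
      \<or> (edge13 r p1 p2 p3 \<and> edge23 r q1 q2 q3)"
  shows "\<exists>q1 q2 q3. centre r q1 q2 q3"
  using assms unfolding edge12_def edge13_def edge23_def centre_def
  apply (simp only: all_bool_eq ex_bool_eq not_True_eq_False not_False_eq_True)
  apply (cases p1; cases p2; cases p3; cases q1; cases q2; cases q3)
  apply (simp_all only: simp_thms)
  apply sat+
  done

lemma flip_PM3_conf:
  assumes "U \<subseteq> {1,2,3::nat}"
  shows "flip_rel PM3 U \<inter> conf {1,2,3} = {flip (\<lambda>i. i = 1) U, flip (\<lambda>i. i = 2) U, flip (\<lambda>i. i = 3) U}"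
proof -
  have "flip (flip y U) U = y" for y :: "nat \<Rightarrow> bool" by (auto simp: flip_def fun_eq_iff)
  then have "flip_rel PM3 U = {flip (\<lambda>i. i = 1) U, flip (\<lambda>i. i = 2) U, flip (\<lambda>i. i = 3) U}"
    unfolding flip_rel_def PM3_def by auto metis+
  then show ?thesis using assms by (auto simp: conf_def flip_def)
qed

locale three =
  fixes a b c :: 'v and V :: "'v set" and R :: "('v \<Rightarrow> bool) set"
  assumes dist: "a \<noteq> b" "a \<noteq> c" "b \<noteq> c" and V: "V = {a,b,c}" and sub: "R \<subseteq> conf V"
begin

definition mk :: "bool \<Rightarrow> bool \<Rightarrow> bool \<Rightarrow> 'v \<Rightarrow> bool" where
  "mk p1 p2 p3 = (\<lambda>t. if t = a then p1 else if t = b then p2 else if t = c then p3 else False)"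

definition rr :: "bool \<Rightarrow> bool \<Rightarrow> bool \<Rightarrow> bool" where
  "rr p1 p2 p3 \<longleftrightarrow> mk p1 p2 p3 \<in> R"

lemma mk_simps[simp]: "mk p1 p2 p3 a = p1" "mk p1 p2 p3 b = p2" "mk p1 p2 p3 c = p3"
  using dist by (auto simp: mk_def)

lemma mk_conf: "x \<in> conf V \<Longrightarrow> x = mk (x a) (x b) (x c)"
  using V by (auto simp: conf_def mk_def fun_eq_iff)

lemma mem_R: "x \<in> R \<Longrightarrow> x = mk (x a) (x b) (x c)"
  using mk_conf sub by auto

lemma mk_eq_iff: "mk p1 p2 p3 = mk q1 q2 q3 \<longleftrightarrow> p1 = q1 \<and> p2 = q2 \<and> p3 = q3"
proof
  assume "mk p1 p2 p3 = mk q1 q2 q3"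
  then have "mk p1 p2 p3 a = mk q1 q2 q3 a" "mk p1 p2 p3 b = mk q1 q2 q3 b" "mk p1 p2 p3 c = mk q1 q2 q3 c"
    by simp_all
  then show "p1 = q1 \<and> p2 = q2 \<and> p3 = q3" by simp
qed simp

definition neighbours :: "bool \<Rightarrow> bool \<Rightarrow> bool \<Rightarrow> ('v \<Rightarrow> bool) set" where
  "neighbours q1 q2 q3 = {mk (\<not>q1) q2 q3, mk q1 (\<not>q2) q3, mk q1 q2 (\<not>q3)}"

lemma flip_mk: "X \<subseteq> V \<Longrightarrow> flip (mk p1 p2 p3) X = mk (p1 \<noteq> (a \<in> X)) (p2 \<noteq> (b \<in> X)) (p3 \<noteq> (c \<in> X))"
  using V dist by (auto simp: flip_def mk_def fun_eq_iff)

lemma exchange: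
  assumes dm: "delta_matroid R" and "rr p1 p2 p3" "rr q1 q2 q3" "i \<in> V"
    and "mk p1 p2 p3 i \<noteq> mk q1 q2 q3 i"
  shows "\<exists>j\<in>V. mk p1 p2 p3 j \<noteq> mk q1 q2 q3 j \<and> flip (mk p1 p2 p3) {i,j} \<in> R"
proof -
  obtain j where j: "mk p1 p2 p3 j \<noteq> mk q1 q2 q3 j" "flip (mk p1 p2 p3) {i,j} \<in> R"
    using assms unfolding delta_matroid_def rr_def by metis
  then have "j \<in> V" using V by (auto simp: mk_def split: if_splits)
  then show ?thesis using j by blast
qed

lemma rr_exchange:
  assumes dm: "delta_matroid R"
  shows "\<forall>p1 p2 p3 q1 q2 q3. rr p1 p2 p3 \<longrightarrow> rr q1 q2 q3 \<longrightarrow> p1 \<noteq> q1 \<longrightarrow>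
      rr (\<not>p1) p2 p3 \<or> (p2 \<noteq> q2 \<and> rr (\<not>p1) (\<not>p2) p3) \<or> (p3 \<noteq> q3 \<and> rr (\<not>p1) p2 (\<not>p3))" (is ?A)
    and "\<forall>p1 p2 p3 q1 q2 q3. rr p1 p2 p3 \<longrightarrow> rr q1 q2 q3 \<longrightarrow> p2 \<noteq> q2 \<longrightarrow>
      rr p1 (\<not>p2) p3 \<or> (p1 \<noteq> q1 \<and> rr (\<not>p1) (\<not>p2) p3) \<or> (p3 \<noteq> q3 \<and> rr p1 (\<not>p2) (\<not>p3))" (is ?B)
    and "\<forall>p1 p2 p3 q1 q2 q3. rr p1 p2 p3 \<longrightarrow> rr q1 q2 q3 \<longrightarrow> p3 \<noteq> q3 \<longrightarrow>
      rr p1 p2 (\<not>p3) \<or> (p1 \<noteq> q1 \<and> rr (\<not>p1) p2 (\<not>p3)) \<or> (p2 \<noteq> q2 \<and> rr p1 (\<not>p2) (\<not>p3))" (is ?C)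
proof -
  have partner: "\<exists>j\<in>V. mk p1 p2 p3 j \<noteq> mk q1 q2 q3 j \<and>
      rr (p1 \<noteq> (a \<in> {i,j})) (p2 \<noteq> (b \<in> {i,j})) (p3 \<noteq> (c \<in> {i,j}))"
    if pq: "rr p1 p2 p3" "rr q1 q2 q3" "i \<in> V" "mk p1 p2 p3 i \<noteq> mk q1 q2 q3 i" for p1 p2 p3 q1 q2 q3 i
  proof -
    obtain j where j: "j \<in> V" "mk p1 p2 p3 j \<noteq> mk q1 q2 q3 j" "flip (mk p1 p2 p3) {i,j} \<in> R"
      using exchange[OF dm pq] by blast
    then show ?thesis using pq(3) flip_mk[of "{i,j}"] unfolding rr_def by auto
  qed
  show ?A
  proof (intro allI impI)
    fix p1 p2 p3 q1 q2 q3 assume "rr p1 p2 p3" "rr q1 q2 q3" "p1 \<noteq> q1"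
    then show "rr (\<not>p1) p2 p3 \<or> (p2 \<noteq> q2 \<and> rr (\<not>p1) (\<not>p2) p3) \<or> (p3 \<noteq> q3 \<and> rr (\<not>p1) p2 (\<not>p3))"
      using partner[of p1 p2 p3 q1 q2 q3 a] V dist by auto
  qed
  show ?B
  proof (intro allI impI)
    fix p1 p2 p3 q1 q2 q3 assume "rr p1 p2 p3" "rr q1 q2 q3" "p2 \<noteq> q2"
    then show "rr p1 (\<not>p2) p3 \<or> (p1 \<noteq> q1 \<and> rr (\<not>p1) (\<not>p2) p3) \<or> (p3 \<noteq> q3 \<and> rr p1 (\<not>p2) (\<not>p3))"
      using partner[of p1 p2 p3 q1 q2 q3 b] V dist by auto
  qed
  show ?C
  proof (intro allI impI)
    fix p1 p2 p3 q1 q2 q3 assume "rr p1 p2 p3" "rr q1 q2 q3" "p3 \<noteq> q3"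
    then show "rr p1 p2 (\<not>p3) \<or> (p1 \<noteq> q1 \<and> rr (\<not>p1) p2 (\<not>p3)) \<or> (p2 \<noteq> q2 \<and> rr p1 (\<not>p2) (\<not>p3))"
      using partner[of p1 p2 p3 q1 q2 q3 c] V dist by auto
  qed
qed

lemma edge_mk:
  "edge R (mk p1 p2 p3) a b = edge12 rr p1 p2 p3" "edge R (mk p1 p2 p3) b a = edge12 rr p1 p2 p3"
  "edge R (mk p1 p2 p3) a c = edge13 rr p1 p2 p3" "edge R (mk p1 p2 p3) c a = edge13 rr p1 p2 p3"
  "edge R (mk p1 p2 p3) b c = edge23 rr p1 p2 p3" "edge R (mk p1 p2 p3) c b = edge23 rr p1 p2 p3"
  unfolding edge_def edge12_def edge13_def edge23_def rr_def
  using V dist by (auto simp: flip_mk insert_commute)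

lemma centre_if_not_path_free:
  assumes dm: "delta_matroid R" and np: "\<not> path_free R"
  shows "\<exists>q1 q2 q3. centre rr q1 q2 q3"
proof -
  obtain F1 F2 u v w where F: "F1 \<in> R" "F2 \<in> R" "u \<noteq> w" "edge R F1 u v" "edge R F2 v w"
    using np unfolding path_free_def by blast
  have uv: "u \<noteq> v" "v \<noteq> w" using edge_neq[OF F(4)] edge_neq[OF F(5)] by auto
  have inV: "u \<in> V" "v \<in> V" "w \<in> V" using edge_in[OF sub F(1) F(4)] edge_in[OF sub F(2) F(5)] by auto
  define p1 p2 p3 q1 q2 q3 where "p1 = F1 a" "p2 = F1 b" "p3 = F1 c" "q1 = F2 a" "q2 = F2 b" "q3 = F2 c"
  have F12: "F1 = mk p1 p2 p3" "F2 = mk q1 q2 q3" using mem_R F(1,2) p1_p2_p3_q1_q2_q3_def by auto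
  have r: "rr p1 p2 p3" "rr q1 q2 q3" using F F12 unfolding rr_def by auto
  have "(edge12 rr p1 p2 p3 \<and> edge13 rr q1 q2 q3) \<or> (edge12 rr p1 p2 p3 \<and> edge23 rr q1 q2 q3)
      \<or> (edge13 rr p1 p2 p3 \<and> edge23 rr q1 q2 q3) \<or> (edge12 rr q1 q2 q3 \<and> edge13 rr p1 p2 p3)
      \<or> (edge12 rr q1 q2 q3 \<and> edge23 rr p1 p2 p3) \<or> (edge13 rr q1 q2 q3 \<and> edge23 rr p1 p2 p3)"
    using inV uv F(3-5) F12 V dist edge_mk by auto
  then show ?thesis
    using centre_of_path[OF rr_exchange[OF dm] r] centre_of_path[OF rr_exchange[OF dm] r(2,1)] by blast
qed

lemma weight_mk: "weight V h (mk p1 p2 p3) = h a * of_bool p1 + h b * of_bool p2 + h c * of_bool p3"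
  using V dist by (simp add: weight_def)

lemma finite_R: "finite R"
proof (rule finite_subset)
  show "R \<subseteq> (\<lambda>(p1,p2,p3). mk p1 p2 p3) ` UNIV"
  proof
    fix x assume "x \<in> R"
    then show "x \<in> (\<lambda>(p1,p2,p3). mk p1 p2 p3) ` UNIV"
      using mem_R by (auto intro: image_eqI[of _ _ "(x a, x b, x c)"])
  qed
qed simp

text \<open>The weight \<plusminus>(indicator of q written in \<plusminus>1) is maximised on R exactly at the neighbours
  of a centre q: it decreases by one per coordinate away from q (sign +, used when q \<notin> R)
  resp. is minimal at q and maximal at distance one (sign -, when R is in the unit ball).\<close>
lemma hmax_centre:
  assumes g: "centre rr q1 q2 q3"
  shows "\<exists>h. hmax V h R = neighbours q1 q2 q3"
proof -
  define e :: int where "e = (if rr q1 q2 q3 then -1 else 1)"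
  define h where "h t = e * (if mk q1 q2 q3 t then 1 else -1)" for t
  define m where "m = weight V h (mk (\<not>q1) q2 q3)"
  have hq: "h a = e * (if q1 then 1 else -1)" "h b = e * (if q2 then 1 else -1)"
    "h c = e * (if q3 then 1 else -1)" by (simp_all add: h_def)
  have key: "rr p1 p2 p3 \<longrightarrow> weight V h (mk p1 p2 p3) \<le> m \<and>
     (weight V h (mk p1 p2 p3) = m \<longleftrightarrow> (p1,p2,p3) \<in> {(\<not>q1,q2,q3),(q1,\<not>q2,q3),(q1,q2,\<not>q3)})" for p1 p2 p3
    using g unfolding m_def weight_mk hq centre_def e_def
    by (cases p1; cases p2; cases p3; cases q1; cases q2; cases q3; simp; blast)
  have N: "mk (\<not>q1) q2 q3 \<in> R" "mk q1 (\<not>q2) q3 \<in> R" "mk q1 q2 (\<not>q3) \<in> R"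
    using g unfolding centre_def rr_def by auto
  have key_R: "weight V h x \<le> m \<and> (weight V h x = m \<longleftrightarrow> x \<in> neighbours q1 q2 q3)"
    if x: "x \<in> R" for x
  proof -
    obtain p1 p2 p3 where "x = mk p1 p2 p3" using mem_R[OF x] by blast
    then show ?thesis using key[of p1 p2 p3] x unfolding rr_def neighbours_def by (auto simp: mk_eq_iff)
  qed
  have "Max (weight V h ` R) = m"
    using finite_R N(1) key_R unfolding m_def by (intro Max_eqI) auto
  then have "hmax V h R = neighbours q1 q2 q3"
    unfolding hmax_def using key_R N by (auto simp: neighbours_def)
  then show ?thesis by blast
qed

definition var_index :: "'v \<Rightarrow> nat" where
  "var_index t = (if t = a then 1 else if t = b then 2 else 3)"

text \<open>The three neighbours of q form the flip of PM_3 along the coordinates where q is 1.\<close>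
lemma neighbours_equiv_PM3:
  "\<exists>U \<subseteq> {1,2,3::nat}. equiv_rel V (neighbours q1 q2 q3) {1,2,3} (flip_rel PM3 U)"
proof -
  define U where "U = {i::nat. (i = 1 \<and> q1) \<or> (i = 2 \<and> q2) \<or> (i = 3 \<and> q3)}"
  define tr where "tr y = (\<lambda>v. if v \<in> V then y (var_index v) else False)" for y :: "nat \<Rightarrow> bool"
  have U: "U \<subseteq> {1,2,3}" unfolding U_def by auto
  have bij: "bij_betw var_index V {1,2,3}"
    unfolding bij_betw_def inj_on_def var_index_def using V dist by auto
  have "tr (flip (\<lambda>i. i = 1) U) = mk (\<not>q1) q2 q3" "tr (flip (\<lambda>i. i = 2) U) = mk q1 (\<not>q2) q3"
    "tr (flip (\<lambda>i. i = 3) U) = mk q1 q2 (\<not>q3)"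
    unfolding tr_def using V dist by (auto simp: fun_eq_iff flip_def var_index_def U_def mk_def)
  then have "neighbours q1 q2 q3 = tr ` (flip_rel PM3 U \<inter> conf {1,2,3})"
    using flip_PM3_conf[OF U] by (simp add: neighbours_def)
  then show ?thesis unfolding equiv_rel_def tr_def using bij U by blast
qed

theorem hmax_PM3_if_not_path_free:
  assumes "delta_matroid R" and "\<not> path_free R"
  shows "\<exists>h. \<exists>U \<subseteq> {1,2,3::nat}. equiv_rel V (hmax V h R) {1,2,3} (flip_rel PM3 U)"
  using centre_if_not_path_free[OF assms] hmax_centre neighbours_equiv_PM3 by metis

end

theorem mainTheorem13:
  fixes V :: "'v set" and R :: "('v \<Rightarrow> bool) set"
  assumes "finite V"
    and "R \<subseteq> conf V"
    and "delta_matroid R"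
    and "\<not> basically_binary V R"
    and "\<And>D p. D \<subseteq> V \<Longrightarrow> D \<noteq> {} \<Longrightarrow> p \<in> conf D \<Longrightarrow>
           basically_binary (V - D) (pinning D p R)"
  shows "\<exists>h :: 'v \<Rightarrow> int. \<exists>U \<subseteq> {1, 2, 3 :: nat}.
           equiv_rel V (hmax V h R) {1, 2, 3} (flip_rel PM3 U)"
proof -
  have pin1_bb: "basically_binary (V - {z}) (pin1 z c R)" if "z \<in> V" for z c
    using assms(5)[of "{z}" "\<lambda>t. t = z \<and> c"] that unfolding pin1_def by (auto simp: conf_def)
  have not_pf: "\<not> path_free R" using bb_of_path_free assms(1-4) by blast
  then have "\<not> card V \<ge> 4" using path_free_if_card_ge_4[OF assms(1,2) pin1_bb assms(3)] by blast
  moreover have "\<not> card V \<le> 2" using bb_if_card_le_2 assms(2,4) by blast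
  ultimately have "card V = 3" by simp
  then obtain a b c where abc: "V = {a,b,c}" "a \<noteq> b" "a \<noteq> c" "b \<noteq> c"
    by (auto simp: card_3_iff)
  interpret three a b c V R using abc assms(2) by unfold_locales auto
  show ?thesis using hmax_PM3_if_not_path_free[OF assms(3) not_pf] .
qed

end
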